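(* The evaluation relation $\succ^*$ on term distributions satisfies: (1) $\vec 0\succ^*\vec 0$; (2) if $\vec t\succ^*\vec t'$ then $\alpha\cdot\vec t\succ^*\alpha\cdot\vec t'$ for all $\alpha\in\mathbb C$; (3) if $\vec t_1\succ^*\vec t'_1$ and $\vec t_2\succ^*\vec t'_2$ then $\vec t_1+\vec t_2\succ^*\vec t'_1+\vec t'_2$.
   Context: Calculus. Pure values: $v,w::=x\mid\lambda x.\vec{s}\mid *\mid (v_1,v_2)\mid \mathtt{inl}(v)\mid\mathtt{inr}(v)$. Pure terms: $s,t::=v\mid s\,t\mid t;\vec{s}\mid \mathtt{let}\,(x_1,x_2)=t\,\mathtt{in}\,\vec{s}\mid \mathtt{match}\,t\,\{\mathtt{inl}\,x_1\mapsto\vec{s}_1\mid\mathtt{inr}\,x_2\mapsto\vec{s}_2\}$. Term distributions $\vec{t}::=\vec{0}\mid t\mid \vec{s}+\vec{t}\mid\alpha\cdot\vec{t}$ ($\alpha\in\mathbb{C}$), with top-level equality modulo the weak-vector-space congruence (commutative monoid for $+,\vec0$; $1\cdot\vec t=\vec t$; $\alpha\cdot(\beta\cdot\vec t)=\alpha\beta\cdot\vec t$; both distributivity laws), not acting inside pure terms; $0\cdot t\neq\vec0$. Constructs extended by linearity. Atomic evaluation $\triangleright$ (pure term to distribution) is the call-by-value relation: $(\lambda x.\vec t)\,v\triangleright\vec t[x:=v]$; $*;\vec s\triangleright\vec s$; $\mathtt{let}\,(x,y)=(v,w)\,\mathtt{in}\,\vec s\triangleright\vec s[x:=v,y:=w]$;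 $\mathtt{match}\,\mathtt{inl}(v)\{\ldots\}\triangleright\vec s_1[x_1:=v]$, $\mathtt{match}\,\mathtt{inr}(v)\{\ldots\}\triangleright\vec s_2[x_2:=v]$; and if $t\triangleright\vec t'$ then $s\,t\triangleright s\,\vec t'$, $t\,v\triangleright\vec t'\,v$, and reduction in the scrutinee of $;$, let, match. One-step evaluation: $\vec t\succ\vec t'$ iff $\vec t=\alpha\cdot s+\vec r$, $\vec t'=\alpha\cdot\vec s'+\vec r$ with $s\triangleright\vec s'$. $\succ^*$ is the reflexive-transitive closure of $\succ$. *)

theory Defs
  imports Complex_Main
begin

text \<open>Pure values, pure terms and (syntactic) term distributions.
  Binders: VLam binds one variable; TLet binds two (index 1 = x1, index 0 = x2);
  each branch of TMatch binds one variable.\<close>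

datatype val = VVar nat | VLam dist | VUnit | VPair val val | VInl val | VInr val
and tm = TVal val | TApp tm tm | TSeq tm dist | TLet tm dist | TMatch tm dist dist
and dist = DZero | DTm tm | DPlus dist dist | DScal complex dist

primrec liftv :: "nat \<Rightarrow> val \<Rightarrow> val"
  and liftt :: "nat \<Rightarrow> tm \<Rightarrow> tm"
  and liftd :: "nat \<Rightarrow> dist \<Rightarrow> dist" where
  "liftv k (VVar i) = (if i < k then VVar i else VVar (Suc i))"
| "liftv k (VLam d) = VLam (liftd (Suc k) d)"
| "liftv k VUnit = VUnit"
| "liftv k (VPair v w) = VPair (liftv k v) (liftv k w)"
| "liftv k (VInl v) = VInl (liftv k v)"
| "liftv k (VInr v) = VInr (liftv k v)"
| "liftt k (TVal v) = TVal (liftv k v)"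
| "liftt k (TApp s t) = TApp (liftt k s) (liftt k t)"
| "liftt k (TSeq t d) = TSeq (liftt k t) (liftd k d)"
| "liftt k (TLet t d) = TLet (liftt k t) (liftd (k + 2) d)"
| "liftt k (TMatch t d1 d2) = TMatch (liftt k t) (liftd (Suc k) d1) (liftd (Suc k) d2)"
| "liftd k DZero = DZero"
| "liftd k (DTm t) = DTm (liftt k t)"
| "liftd k (DPlus a b) = DPlus (liftd k a) (liftd k b)"
| "liftd k (DScal \<alpha> a) = DScal \<alpha> (liftd k a)"

primrec substv :: "nat \<Rightarrow> val \<Rightarrow> val \<Rightarrow> val"
  and substt :: "nat \<Rightarrow> val \<Rightarrow> tm \<Rightarrow> tm"
  and substd :: "nat \<Rightarrow> val \<Rightarrow> dist \<Rightarrow> dist" where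
  "substv k u (VVar i) = (if i < k then VVar i else if i = k then u else VVar (i - 1))"
| "substv k u (VLam d) = VLam (substd (Suc k) (liftv 0 u) d)"
| "substv k u VUnit = VUnit"
| "substv k u (VPair v w) = VPair (substv k u v) (substv k u w)"
| "substv k u (VInl v) = VInl (substv k u v)"
| "substv k u (VInr v) = VInr (substv k u v)"
| "substt k u (TVal v) = TVal (substv k u v)"
| "substt k u (TApp s t) = TApp (substt k u s) (substt k u t)"
| "substt k u (TSeq t d) = TSeq (substt k u t) (substd k u d)"
| "substt k u (TLet t d) = TLet (substt k u t) (substd (k + 2) (liftv 0 (liftv 0 u)) d)"
| "substt k u (TMatch t d1 d2) =
     TMatch (substt k u t) (substd (Suc k) (liftv 0 u) d1) (substd (Suc k) (liftv 0 u) d2)"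
| "substd k u DZero = DZero"
| "substd k u (DTm t) = DTm (substt k u t)"
| "substd k u (DPlus a b) = DPlus (substd k u a) (substd k u b)"
| "substd k u (DScal \<alpha> a) = DScal \<alpha> (substd k u a)"

fun dmap :: "(tm \<Rightarrow> tm) \<Rightarrow> dist \<Rightarrow> dist" where
  "dmap f DZero = DZero"
| "dmap f (DTm t) = DTm (f t)"
| "dmap f (DPlus a b) = DPlus (dmap f a) (dmap f b)"
| "dmap f (DScal \<alpha> a) = DScal \<alpha> (dmap f a)"

inductive atom :: "tm \<Rightarrow> dist \<Rightarrow> bool" where
  beta: "atom (TApp (TVal (VLam d)) (TVal v)) (substd 0 v d)"
| seq_unit: "atom (TSeq (TVal VUnit) d) d"
| let_pair: "atom (TLet (TVal (VPair v w)) d) (substd 0 v (substd 0 (liftv 0 w) d))"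
| match_inl: "atom (TMatch (TVal (VInl v)) d1 d2) (substd 0 v d1)"
| match_inr: "atom (TMatch (TVal (VInr v)) d1 d2) (substd 0 v d2)"
| app_arg: "atom t d \<Longrightarrow> atom (TApp s t) (dmap (TApp s) d)"
| app_fun: "atom t d \<Longrightarrow> atom (TApp t (TVal v)) (dmap (\<lambda>u. TApp u (TVal v)) d)"
| seq_ctx: "atom t d \<Longrightarrow> atom (TSeq t e) (dmap (\<lambda>u. TSeq u e) d)"
| let_ctx: "atom t d \<Longrightarrow> atom (TLet t e) (dmap (\<lambda>u. TLet u e) d)"
| match_ctx: "atom t d \<Longrightarrow> atom (TMatch t e1 e2) (dmap (\<lambda>u. TMatch u e1 e2) d)"

section \<open>Weak-vector-space congruence (top level only)\<close>

inductive deq :: "dist \<Rightarrow> dist \<Rightarrow> bool" where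
  refl: "deq a a"
| sym: "deq a b \<Longrightarrow> deq b a"
| trans: "deq a b \<Longrightarrow> deq b c \<Longrightarrow> deq a c"
| plus_cong: "deq a a' \<Longrightarrow> deq b b' \<Longrightarrow> deq (DPlus a b) (DPlus a' b')"
| scal_cong: "deq a a' \<Longrightarrow> deq (DScal \<alpha> a) (DScal \<alpha> a')"
| plus_comm: "deq (DPlus a b) (DPlus b a)"
| plus_assoc: "deq (DPlus (DPlus a b) c) (DPlus a (DPlus b c))"
| plus_zero: "deq (DPlus a DZero) a"
| scal_one: "deq (DScal 1 a) a"
| scal_scal: "deq (DScal \<alpha> (DScal \<beta> a)) (DScal (\<alpha> * \<beta>) a)"
| distr_vec: "deq (DScal \<alpha> (DPlus a b)) (DPlus (DScal \<alpha> a) (DScal \<alpha> b))"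
| distr_scal: "deq (DScal (\<alpha> + \<beta>) a) (DPlus (DScal \<alpha> a) (DScal \<beta> a))"

lemma equivp_deq: "equivp deq"
  by (rule equivpI) (auto simp: reflp_def symp_def transp_def intro: deq.intros)

quotient_type qdist = dist / deq
  by (rule equivp_deq)

lift_definition qzero :: qdist is DZero .
lift_definition qtm :: "tm \<Rightarrow> qdist" is DTm .
lift_definition qplus :: "qdist \<Rightarrow> qdist \<Rightarrow> qdist" is DPlus
  by (rule deq.plus_cong)
lift_definition qscal :: "complex \<Rightarrow> qdist \<Rightarrow> qdist" is DScal
  by (rule deq.scal_cong)

definition step :: "qdist \<Rightarrow> qdist \<Rightarrow> bool" where
  "step a b \<longleftrightarrow> (\<exists>\<alpha> s s' r. atom s s' \<and>
      a = qplus (qscal \<alpha> (qtm s)) r \<and> b = qplus (qscal \<alpha> (abs_qdist s')) r)"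

definition evals :: "qdist \<Rightarrow> qdist \<Rightarrow> bool" where
  "evals = step\<^sup>*\<^sup>*"

end

theory Submission
  imports Defs
begin

text \<open>A redex \<open>\<alpha>\<cdot>s\<close> inside \<open>\<alpha>\<cdot>s + r\<close> stays a redex after scaling the whole
  distribution by \<open>\<beta>\<close> (it becomes \<open>(\<beta>\<alpha>)\<cdot>s + \<beta>\<cdot>r\<close>) or after adding \<open>c\<close> (it becomes
  \<open>\<alpha>\<cdot>s + (r + c)\<close>). Hence scaling and right addition map steps to steps, and so
  evaluation sequences to evaluation sequences; addition on the left follows by
  commutativity, and two evaluations are combined by running them one after the other.\<close>

lemma rtranclp_map:
  assumes "\<And>a b. r a b \<Longrightarrow> r (f a) (f b)" and "r\<^sup>*\<^sup>* a b"
  shows "r\<^sup>*\<^sup>* (f a) (f b)"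
  using assms(2) by induction (auto intro: rtranclp.rtrancl_into_rtrancl assms(1))

lemma qplus_assoc: "qplus (qplus a b) c = qplus a (qplus b c)"
  by transfer (rule deq.plus_assoc)

lemma qplus_comm: "qplus a b = qplus b a"
  by transfer (rule deq.plus_comm)

lemma qscal_qplus: "qscal \<alpha> (qplus a b) = qplus (qscal \<alpha> a) (qscal \<alpha> b)"
  by transfer (rule deq.distr_vec)

lemma qscal_qscal: "qscal \<alpha> (qscal \<beta> a) = qscal (\<alpha> * \<beta>) a"
  by transfer (rule deq.scal_scal)

lemma step_qscal:
  assumes "step a b"
  shows "step (qscal \<beta> a) (qscal \<beta> b)"
proof -
  from assms obtain \<alpha> s s' r where "atom s s'"
    and a: "a = qplus (qscal \<alpha> (qtm s)) r" and b: "b = qplus (qscal \<alpha> (abs_qdist s')) r"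
    unfolding step_def by blast
  moreover have "qscal \<beta> a = qplus (qscal (\<beta> * \<alpha>) (qtm s)) (qscal \<beta> r)"
    and "qscal \<beta> b = qplus (qscal (\<beta> * \<alpha>) (abs_qdist s')) (qscal \<beta> r)"
    unfolding a b by (simp_all add: qscal_qplus qscal_qscal)
  ultimately show ?thesis
    unfolding step_def by blast
qed

lemma step_qplus_right:
  assumes "step a b"
  shows "step (qplus a c) (qplus b c)"
proof -
  from assms obtain \<alpha> s s' r where "atom s s'"
    and "a = qplus (qscal \<alpha> (qtm s)) r" and "b = qplus (qscal \<alpha> (abs_qdist s')) r"
    unfolding step_def by blast
  then show ?thesis
    unfolding step_def by (metis qplus_assoc)
qed

lemma evals_refl: "evals a a"
  by (simp add: evals_def)

lemma evals_trans: "evals a b \<Longrightarrow> evals b c \<Longrightarrow> evals a c"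
  unfolding evals_def by (rule rtranclp_trans)

lemma evals_qscal: "evals a b \<Longrightarrow> evals (qscal \<beta> a) (qscal \<beta> b)"
  unfolding evals_def using rtranclp_map[of step "qscal \<beta>"] step_qscal by blast

lemma evals_qplus_right: "evals a b \<Longrightarrow> evals (qplus a c) (qplus b c)"
  unfolding evals_def using rtranclp_map[of step "\<lambda>a. qplus a c"] step_qplus_right by blast

lemma evals_qplus_left: "evals a b \<Longrightarrow> evals (qplus c a) (qplus c b)"
  using evals_qplus_right by (simp add: qplus_comm)

lemma evals_qplus:
  assumes "evals a a'" and "evals b b'"
  shows "evals (qplus a b) (qplus a' b')"
  using evals_trans[OF evals_qplus_right[OF assms(1)] evals_qplus_left[OF assms(2)]] .

theorem mainTheorem9:
  shows "evals qzero qzero \<and>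
    (\<forall>(\<alpha>::complex) t t'. evals t t' \<longrightarrow> evals (qscal \<alpha> t) (qscal \<alpha> t')) \<and>
    (\<forall>t1 t1' t2 t2'. evals t1 t1' \<longrightarrow> evals t2 t2' \<longrightarrow>
           evals (qplus t1 t2) (qplus t1' t2'))"
  by (simp add: evals_refl evals_qscal evals_qplus)

end
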